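(* Let $\partial$ be a quasi-elementary $M_{A,B}$-differential with associated sets $P\subset B$, $X\subset A\setminus B$ and set $H(\partial)$ of $\partial$-boundary homologically essential elements. If $p\in H(\partial)$ appears (with nonzero coefficient) in $\partial(x)$ for some $x\in X$, then $x$ and $p$ form a $\partial'$-pair, where $\partial'$ is $\partial$ regarded as an $M_{A'}$-differential.
   Context: $\mathbb E$ a field; $A$ a finite linearly ordered graded set, $\mathbb E(A)$ the graded vector space with basis $A$; an $M$-differential is a degree $-1$ map with $\partial^2=0$ sending each basis element into the span of strictly smaller basis elements. For $B\subset A$ with $\partial\mathbb E(B)\subset\mathbb E(B)$, $\partial$ is an $M_{A,B}$-differential; $\partial_B$ is its restriction and $\partial_{A\setminus B}$ the induced differential on $\mathbb E(A)/\mathbb E(B)\cong\mathbb E(A\setminus B)$. An $M$-differential is elementary if every basis element maps to $0$ or to a single basis element and no two basis elements map to the same one. For $\partial$ with $\partial_B,\partial_{A\setminus B}$ elementary: $Q=\{b\in B:\partial_Bb\ne0\}$, $R=\partial_B(Q)$, $P=B\setminus(Q\cup R)$, $Y=\{a\in A\setminus B:\partial_{A\setminus B}a\ne0\}$, $Z=\partial_{A\setminus B}(Y)$, $X=(A\setminus B)\setminus(Y\cup Z)$. $\partial$ is quasi-elementary if $\partial_B,\partial_{A\setminus B}$ are elementary, each $\partial(x)$, $x\in X$, contains at most one element of $P$ and with coefficient $1$, and each element of $P$ appears in at most one $\partial(x)$, $x\in X$. $H(\partial)$: writing $B=\{b_1\prec\dots\prec b_K\}$, $I_k=\iota_*H_*(\mathbb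 E(\{b_1,\dots,b_k\}),\partial_B)\cap\partial_*H_*(\mathbb E(A),\mathbb E(B),\partial)$ ($\iota_*$ from inclusion into $\mathbb E(B)$, $\partial_*$ the connecting map), $I_0=0$, and $b_k\in H(\partial)$ iff $I_k\ne I_{k-1}$. If $B=\{b_1\prec\dots\prec b_K\}$ and $A\setminus B=\{a_1\prec\dots\prec a_L\}$, $A'$ denotes the graded set $A$ with the new order $b_1\prec\dots\prec b_K\prec a_1\prec\dots\prec a_L$; an $M_{A,B}$-differential is also an $M$-differential for $A'$. For an $M$-differential $\delta$ on a linearly ordered graded basis, there is a unique elementary $M$-differential $\delta_1$ obtained from $\delta$ by conjugation with a graded automorphism preserving every initial span $\mathrm{span}\{a_1,\dots,a_i\}$ (Barannikov); $u,v$ form a $\delta$-pair if $\delta_1(u)=v$. *)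

theory Defs
  imports Main
begin

text \<open>The basis is a finite set A of elements of type 'a; its grading is
  deg :: 'a => int; its linear order is a strict linear order r on A (a pair (x,y) in r
  means x precedes y).  The vector space E(A) over the field 'k is represented by the
  coefficient functions 'a => 'k vanishing outside A.  A linear map on E(A) (in particular
  a differential) is represented by its matrix d :: 'a => 'a => 'k, where d a c is the
  coefficient of the basis element c in the image of the basis element a.\<close>

definition EV :: "'a set \<Rightarrow> ('a \<Rightarrow> 'k::field) set" where
  "EV A = {v. \<forall>c. c \<notin> A \<longrightarrow> v c = 0}"

definition lin :: "'a set \<Rightarrow> ('a \<Rightarrow> 'a \<Rightarrow> 'k::field) \<Rightarrow> ('a \<Rightarrow> 'k) \<Rightarrow> ('a \<Rightarrow> 'k)" where
  "lin A d v = (\<lambda>c. \<Sum>a\<in>A. v a * d a c)"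

definition bvec :: "'a \<Rightarrow> ('a \<Rightarrow> 'k::field)" where
  "bvec b = (\<lambda>c. if c = b then 1 else 0)"

definition M_differential ::
  "'a set \<Rightarrow> ('a \<times> 'a) set \<Rightarrow> ('a \<Rightarrow> int) \<Rightarrow> ('a \<Rightarrow> 'a \<Rightarrow> 'k::field) \<Rightarrow> bool" where
  "M_differential A r deg d \<longleftrightarrow>
     (\<forall>a c. d a c \<noteq> 0 \<longrightarrow> a \<in> A \<and> c \<in> A \<and> (c, a) \<in> r \<and> deg c = deg a - 1) \<and>
     (\<forall>a\<in>A. \<forall>c. (\<Sum>b\<in>A. d a b * d b c) = 0)"

definition M_AB_differential ::
  "'a set \<Rightarrow> 'a set \<Rightarrow> ('a \<times> 'a) set \<Rightarrow> ('a \<Rightarrow> int) \<Rightarrow> ('a \<Rightarrow> 'a \<Rightarrow> 'k::field) \<Rightarrow> bool" where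
  "M_AB_differential A B r deg d \<longleftrightarrow>
     M_differential A r deg d \<and> B \<subseteq> A \<and> (\<forall>b\<in>B. \<forall>c. d b c \<noteq> 0 \<longrightarrow> c \<in> B)"

text \<open>Restriction of d to E(B), and the induced differential on E(A)/E(B) = E(A \ B).\<close>
definition restr :: "'a set \<Rightarrow> ('a \<Rightarrow> 'a \<Rightarrow> 'k::field) \<Rightarrow> 'a \<Rightarrow> 'a \<Rightarrow> 'k" where
  "restr B d = (\<lambda>a c. if a \<in> B \<and> c \<in> B then d a c else 0)"

definition quot :: "'a set \<Rightarrow> 'a set \<Rightarrow> ('a \<Rightarrow> 'a \<Rightarrow> 'k::field) \<Rightarrow> 'a \<Rightarrow> 'a \<Rightarrow> 'k" where
  "quot A B d = (\<lambda>a c. if a \<in> A - B \<and> c \<in> A - B then d a c else 0)"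

definition elementary ::
  "'a set \<Rightarrow> ('a \<times> 'a) set \<Rightarrow> ('a \<Rightarrow> int) \<Rightarrow> ('a \<Rightarrow> 'a \<Rightarrow> 'k::field) \<Rightarrow> bool" where
  "elementary A r deg d \<longleftrightarrow>
     M_differential A r deg d \<and>
     (\<forall>a\<in>A. d a = (\<lambda>_. 0) \<or> (\<exists>b\<in>A. d a = bvec b)) \<and>
     (\<forall>a1\<in>A. \<forall>a2\<in>A. d a1 \<noteq> (\<lambda>_. 0) \<longrightarrow> d a1 = d a2 \<longrightarrow> a1 = a2)"

definition QE_Q :: "'a set \<Rightarrow> ('a \<Rightarrow> 'a \<Rightarrow> 'k::field) \<Rightarrow> 'a set" where
  "QE_Q B d = {b\<in>B. restr B d b \<noteq> (\<lambda>_. 0)}"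

definition QE_R :: "'a set \<Rightarrow> ('a \<Rightarrow> 'a \<Rightarrow> 'k::field) \<Rightarrow> 'a set" where
  "QE_R B d = {c. \<exists>b\<in>QE_Q B d. restr B d b = bvec c}"

definition QE_P :: "'a set \<Rightarrow> ('a \<Rightarrow> 'a \<Rightarrow> 'k::field) \<Rightarrow> 'a set" where
  "QE_P B d = B - (QE_Q B d \<union> QE_R B d)"

definition QE_Y :: "'a set \<Rightarrow> 'a set \<Rightarrow> ('a \<Rightarrow> 'a \<Rightarrow> 'k::field) \<Rightarrow> 'a set" where
  "QE_Y A B d = {a\<in>A - B. quot A B d a \<noteq> (\<lambda>_. 0)}"

definition QE_Z :: "'a set \<Rightarrow> 'a set \<Rightarrow> ('a \<Rightarrow> 'a \<Rightarrow> 'k::field) \<Rightarrow> 'a set" where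
  "QE_Z A B d = {c. \<exists>a\<in>QE_Y A B d. quot A B d a = bvec c}"

definition QE_X :: "'a set \<Rightarrow> 'a set \<Rightarrow> ('a \<Rightarrow> 'a \<Rightarrow> 'k::field) \<Rightarrow> 'a set" where
  "QE_X A B d = (A - B) - (QE_Y A B d \<union> QE_Z A B d)"

definition quasi_elementary ::
  "'a set \<Rightarrow> 'a set \<Rightarrow> ('a \<times> 'a) set \<Rightarrow> ('a \<Rightarrow> int) \<Rightarrow> ('a \<Rightarrow> 'a \<Rightarrow> 'k::field) \<Rightarrow> bool" where
  "quasi_elementary A B r deg d \<longleftrightarrow>
     M_AB_differential A B r deg d \<and>
     elementary B r deg (restr B d) \<and>
     elementary (A - B) r deg (quot A B d) \<and>
     (\<forall>x\<in>QE_X A B d. card {p\<in>QE_P B d. d x p \<noteq> 0} \<le> 1 \<and>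
                      (\<forall>p\<in>QE_P B d. d x p \<noteq> 0 \<longrightarrow> d x p = 1)) \<and>
     (\<forall>p\<in>QE_P B d. card {x\<in>QE_X A B d. d x p \<noteq> 0} \<le> 1)"

definition supp_in :: "'a set \<Rightarrow> ('a \<Rightarrow> 'k::field) set" where
  "supp_in S = {v. \<forall>c. c \<notin> S \<longrightarrow> v c = 0}"

text \<open>Chain-level description of iota_* H(E(S), d_B) (for an initial segment S of B),
  as the subspace of E(B) of cycles supported in S plus boundaries of d_B; it contains
  the boundaries of d_B and its image in H(E(B), d_B) is the image of iota_*.\<close>
definition cyc_plus_bd ::
  "'a set \<Rightarrow> 'a set \<Rightarrow> ('a \<Rightarrow> 'a \<Rightarrow> 'k::field) \<Rightarrow> ('a \<Rightarrow> 'k) set" where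
  "cyc_plus_bd B S dB =
     {(\<lambda>c. z c + w c) | z w.
        z \<in> EV B \<and> z \<in> supp_in S \<and> lin B dB z = (\<lambda>_. 0) \<and>
        w \<in> lin B dB ` EV B}"

text \<open>Chain-level description of the image of the connecting map
  partial_* : H(E(A), E(B)) -> H(E(B)): boundaries of relative cycles.
  This set contains all d_B-boundaries.\<close>
definition conn_img ::
  "'a set \<Rightarrow> 'a set \<Rightarrow> ('a \<Rightarrow> 'a \<Rightarrow> 'k::field) \<Rightarrow> ('a \<Rightarrow> 'k) set" where
  "conn_img A B d = {lin A d v | v. v \<in> EV A \<and> lin A d v \<in> EV B}"

text \<open>Since both subspaces contain the boundaries of d_B, I_k corresponds bijectively to
  cyc_plus_bd B {b_1..b_k} (restr B d) \<inter> conn_img A B d, so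
  b_k \<in> H(d) iff these sets differ for the segments {b_1..b_k} and {b_1..b_(k-1)}.\<close>
definition H_ess ::
  "'a set \<Rightarrow> 'a set \<Rightarrow> ('a \<times> 'a) set \<Rightarrow> ('a \<Rightarrow> 'a \<Rightarrow> 'k::field) \<Rightarrow> 'a set" where
  "H_ess A B r d =
     {b\<in>B. cyc_plus_bd B {c\<in>B. c = b \<or> (c, b) \<in> r} (restr B d) \<inter> conn_img A B d
          \<noteq> cyc_plus_bd B {c\<in>B. (c, b) \<in> r} (restr B d) \<inter> conn_img A B d}"

text \<open>The order of A': all of B (in its old order) before all of A \ B (in its old order).\<close>
definition reorder :: "'a set \<Rightarrow> 'a set \<Rightarrow> ('a \<times> 'a) set \<Rightarrow> ('a \<times> 'a) set" where
  "reorder A B r =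
     {(x, y). x \<in> A \<and> y \<in> A \<and>
              ((x \<in> B \<and> y \<notin> B) \<or> ((x \<in> B \<longleftrightarrow> y \<in> B) \<and> (x, y) \<in> r))}"

definition init_span :: "'a set \<Rightarrow> ('a \<times> 'a) set \<Rightarrow> 'a \<Rightarrow> ('a \<Rightarrow> 'k::field) set" where
  "init_span A r a = EV A \<inter> supp_in {c\<in>A. c = a \<or> (c, a) \<in> r}"

definition graded_aut_initial ::
  "'a set \<Rightarrow> ('a \<times> 'a) set \<Rightarrow> ('a \<Rightarrow> int) \<Rightarrow> ('a \<Rightarrow> 'a \<Rightarrow> 'k::field) \<Rightarrow> bool" where
  "graded_aut_initial A r deg T \<longleftrightarrow>
     (\<forall>a c. T a c \<noteq> 0 \<longrightarrow> a \<in> A \<and> c \<in> A \<and> deg c = deg a) \<and>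
     bij_betw (lin A T) (EV A) (EV A) \<and>
     (\<forall>a\<in>A. lin A T ` init_span A r a = init_span A r a)"

definition barannikov ::
  "'a set \<Rightarrow> ('a \<times> 'a) set \<Rightarrow> ('a \<Rightarrow> int) \<Rightarrow> ('a \<Rightarrow> 'a \<Rightarrow> 'k::field) \<Rightarrow> 'a \<Rightarrow> 'a \<Rightarrow> 'k" where
  "barannikov A r deg d =
     (THE d1. elementary A r deg d1 \<and>
        (\<exists>T. graded_aut_initial A r deg T \<and>
             (\<forall>v\<in>EV A. lin A d1 (lin A T v) = lin A T (lin A d v))))"

definition is_pair ::
  "'a set \<Rightarrow> ('a \<times> 'a) set \<Rightarrow> ('a \<Rightarrow> int) \<Rightarrow> ('a \<Rightarrow> 'a \<Rightarrow> 'k::field) \<Rightarrow> 'a \<Rightarrow> 'a \<Rightarrow> bool" where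
  "is_pair A r deg d u v \<longleftrightarrow> barannikov A r deg d u = bvec v"

end

theory Submission
  imports Defs
begin

text \<open>Barannikov's normal form is unique: whether the row of a basis element a vanishes, and
  otherwise which basis vector it is, can be read off from the subspaces E({c' \<preceq> c}) that
  contain the image of some vector of the initial span of a with nonzero a-coordinate, and
  this is invariant under conjugation by automorphisms preserving initial spans.  So it
  suffices to exhibit one elementary differential conjugate to \<partial> for the order of A'.  For
  a quasi-elementary \<partial> this is \<partial> on B, the P-component of \<partial>x for x \<in> X, and the quotient
  differential on Y \<union> Z; the conjugating automorphism is 1 - H, where H maps E(A \<setminus> B)
  into E(B) and is obtained from \<partial> \<circ> \<partial> = 0 by lifting through the pairing Q \<rightarrow> R.
  Finally, if p occurs in \<partial>x for some x \<in> X, then p \<notin> Q by \<partial> \<circ> \<partial> = 0, and p \<notin> R because a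
  basis element that is a boundary is not homologically essential.  Hence p \<in> P and the
  normal form sends x to p.\<close>

section \<open>Matrices acting on E(A)\<close>

lemma sum_eq_single:
  assumes "finite A" "a \<in> A" "\<And>b. b \<in> A \<Longrightarrow> b \<noteq> a \<Longrightarrow> f b = 0"
  shows "sum f A = (f a :: 'b::comm_monoid_add)"
  using sum.remove[OF assms(1,2), of f] assms(3) by (simp add: sum.neutral)

lemma lin_lin:
  assumes "finite A"
  shows "lin A N (lin A M v) = lin A (\<lambda>a c. \<Sum>b\<in>A. M a b * N b c) v"
proof -
  have "(\<Sum>b\<in>A. (\<Sum>a\<in>A. v a * M a b) * N b c) = (\<Sum>a\<in>A. v a * (\<Sum>b\<in>A. M a b * N b c))"
    for c
  proof -
    have "(\<Sum>b\<in>A. (\<Sum>a\<in>A. v a * M a b) * N b c) = (\<Sum>b\<in>A. \<Sum>a\<in>A. v a * (M a b * N b c))"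
      by (simp add: sum_distrib_right mult.assoc)
    also have "\<dots> = (\<Sum>a\<in>A. \<Sum>b\<in>A. v a * (M a b * N b c))" by (rule sum.swap)
    also have "\<dots> = (\<Sum>a\<in>A. v a * (\<Sum>b\<in>A. M a b * N b c))" by (simp add: sum_distrib_left)
    finally show ?thesis .
  qed
  then show ?thesis unfolding lin_def by simp
qed

lemma lin_bvec:
  assumes "finite A" "a \<in> A"
  shows "lin A M (bvec a) = M a"
proof
  fix c show "lin A M (bvec a) c = M a c"
    unfolding lin_def using sum_eq_single[OF assms, of "\<lambda>b. bvec a b * M b c"]
    by (simp add: bvec_def)
qed

lemma lin_in_EV:
  assumes "\<And>a c. M a c \<noteq> 0 \<Longrightarrow> c \<in> A"
  shows "lin A M v \<in> EV A"
  using assms unfolding lin_def EV_def by (auto intro!: sum.neutral)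

lemma lin_cong_rows:
  assumes "\<And>a c. a \<in> A \<Longrightarrow> M a c = N a c"
  shows "lin A M v = lin A N v"
  using assms unfolding lin_def by simp

lemma lin_zero [simp]: "lin A M (\<lambda>_. 0) = (\<lambda>_. 0)"
  unfolding lin_def by simp

lemma lin_minus: "lin A M (\<lambda>c. - u c) = (\<lambda>c. - lin A M u c)"
  unfolding lin_def by (simp add: sum_negf)

lemma lin_diff: "lin A M (\<lambda>c. u c - w c) = (\<lambda>c. lin A M u c - lin A M w c)"
  unfolding lin_def by (simp add: sum_subtractf algebra_simps)

lemma lin_add_scaled: "lin A M (\<lambda>c. u c + k * w c) = (\<lambda>c. lin A M u c + k * lin A M w c)"
  unfolding lin_def by (simp add: sum.distrib sum_distrib_left algebra_simps)

lemma bvec_inj: "bvec a = (bvec b :: 'a \<Rightarrow> 'k::field) \<Longrightarrow> a = b"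
  unfolding bvec_def by (metis one_neq_zero)

lemma bvec_in_init_span: "a \<in> A \<Longrightarrow> bvec a \<in> init_span A r a"
  unfolding init_span_def EV_def supp_in_def bvec_def by auto

lemma lin_lower_triangular_init_span:
  assumes lower: "\<And>a c. M a c \<noteq> 0 \<Longrightarrow> c \<in> A \<and> (c = a \<or> (c, a) \<in> r)"
    and "trans r" and v: "v \<in> init_span A r a"
  shows "lin A M v \<in> init_span A r a"
  unfolding init_span_def
proof
  show "lin A M v \<in> EV A" by (rule lin_in_EV) (use lower in blast)
  show "lin A M v \<in> supp_in {c \<in> A. c = a \<or> (c, a) \<in> r}"
    unfolding supp_in_def
  proof (intro CollectI allI impI)
    fix c assume c: "c \<notin> {c \<in> A. c = a \<or> (c, a) \<in> r}"
    have "v b * M b c = 0" for b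
    proof (rule ccontr)
      assume "v b * M b c \<noteq> 0"
      then have "b = a \<or> (b, a) \<in> r" "c \<in> A" "c = b \<or> (c, b) \<in> r"
        using v lower[of b c] unfolding init_span_def supp_in_def by auto
      then show False using c \<open>trans r\<close> unfolding trans_def by blast
    qed
    then show "lin A M v c = 0" by (simp add: lin_def sum.neutral)
  qed
qed

definition id_mat :: "'a set \<Rightarrow> 'a \<Rightarrow> 'a \<Rightarrow> 'k::field" where
  "id_mat A a c = (if a \<in> A \<and> c = a then 1 else 0)"

lemma sum_id_mat_left: "finite A \<Longrightarrow> a \<in> A \<Longrightarrow> (\<Sum>b\<in>A. id_mat A a b * f b) = f a"
  using sum_eq_single[of A a "\<lambda>b. id_mat A a b * f b"] by (simp add: id_mat_def)

lemma sum_id_mat_right: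
  assumes "finite A" "\<And>c. f c \<noteq> 0 \<Longrightarrow> c \<in> A"
  shows "(\<Sum>b\<in>A. f b * id_mat A b c) = f c"
proof (cases "c \<in> A")
  case True
  then show ?thesis using sum_eq_single[OF assms(1) True, of "\<lambda>b. f b * id_mat A b c"]
    by (simp add: id_mat_def)
next
  case False
  then have "f c = 0" using assms(2) by blast
  moreover have "(\<Sum>b\<in>A. f b * id_mat A b c) = 0"
    by (rule sum.neutral) (use False in \<open>auto simp: id_mat_def\<close>)
  ultimately show ?thesis by simp
qed

lemma lin_id_mat: "finite A \<Longrightarrow> v \<in> EV A \<Longrightarrow> lin A (id_mat A) v = v"
  unfolding lin_def EV_def by (rule ext) (subst sum_id_mat_right, auto)

lemma unipotent_inverse:
  fixes H :: "'a \<Rightarrow> 'a \<Rightarrow> 'k::field"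
  assumes fin: "finite A" and H_A: "\<And>a c. H a c \<noteq> 0 \<Longrightarrow> c \<in> A"
    and H_sq: "\<And>a c. a \<in> A \<Longrightarrow> (\<Sum>b\<in>A. H a b * H b c) = 0"
    and v: "v \<in> EV A"
  shows "lin A (\<lambda>a c. id_mat A a c + H a c) (lin A (\<lambda>a c. id_mat A a c - H a c) v) = v"
    and "lin A (\<lambda>a c. id_mat A a c - H a c) (lin A (\<lambda>a c. id_mat A a c + H a c) v) = v"
proof -
  have "(\<Sum>b\<in>A. id_mat A a b * id_mat A b c) = id_mat A a c"
    "(\<Sum>b\<in>A. id_mat A a b * H b c) = H a c" if "a \<in> A" for a c
    by (rule sum_id_mat_left[OF fin that])+
  moreover have "(\<Sum>b\<in>A. H a b * id_mat A b c) = H a c" for a c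
    using sum_id_mat_right[OF fin, of "H a"] H_A by blast
  ultimately have prod:
    "(\<Sum>b\<in>A. (id_mat A a b - H a b) * (id_mat A b c + H b c)) = id_mat A a c"
    "(\<Sum>b\<in>A. (id_mat A a b + H a b) * (id_mat A b c - H b c)) = id_mat A a c"
    if "a \<in> A" for a c
    using that H_sq[OF that, of c] by (simp_all add: ring_distribs sum.distrib sum_subtractf)
  have "lin A (\<lambda>a c. id_mat A a c + H a c) (lin A (\<lambda>a c. id_mat A a c - H a c) v) =
      lin A (id_mat A) v"
    unfolding lin_lin[OF fin] by (rule lin_cong_rows) (rule prod(1))
  moreover have "lin A (\<lambda>a c. id_mat A a c - H a c) (lin A (\<lambda>a c. id_mat A a c + H a c) v) =
      lin A (id_mat A) v"
    unfolding lin_lin[OF fin] by (rule lin_cong_rows) (rule prod(2))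
  ultimately show "lin A (\<lambda>a c. id_mat A a c + H a c) (lin A (\<lambda>a c. id_mat A a c - H a c) v) = v"
    "lin A (\<lambda>a c. id_mat A a c - H a c) (lin A (\<lambda>a c. id_mat A a c + H a c) v) = v"
    using lin_id_mat[OF fin v] by simp_all
qed

lemma unipotent_graded_aut_initial:
  fixes H :: "'a \<Rightarrow> 'a \<Rightarrow> 'k::field"
  assumes fin: "finite A" and "trans r"
    and H: "\<And>a c. H a c \<noteq> 0 \<Longrightarrow> a \<in> A \<and> c \<in> A \<and> deg c = deg a \<and> (c, a) \<in> r"
    and H_sq: "\<And>a c. a \<in> A \<Longrightarrow> (\<Sum>b\<in>A. H a b * H b c) = 0"
  shows "graded_aut_initial A r deg (\<lambda>a c. id_mat A a c - H a c)"
proof -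
  define T where "T = (\<lambda>a c. id_mat A a c - H a c)"
  define T' where "T' = (\<lambda>a c. id_mat A a c + H a c)"
  have supp: "a \<in> A \<and> c \<in> A \<and> deg c = deg a \<and> (c = a \<or> (c, a) \<in> r)"
    if "M a c \<noteq> 0" "M = T \<or> M = T'" for M a c
    using that H[of a c] by (cases "H a c = 0") (auto simp: T_def T'_def id_mat_def split: if_splits)
  have inverse: "lin A T' (lin A T v) = v" "lin A T (lin A T' v) = v" if "v \<in> EV A" for v
    unfolding T_def T'_def using unipotent_inverse[OF fin _ H_sq that] H by blast+
  have in_EV: "lin A M v \<in> EV A" if "M = T \<or> M = T'" for M v
    by (rule lin_in_EV) (use supp that in blast)
  have init_span: "lin A M v \<in> init_span A r a" if "v \<in> init_span A r a" "M = T \<or> M = T'" for M v a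
    by (rule lin_lower_triangular_init_span[OF _ \<open>trans r\<close> that(1)]) (use supp that(2) in blast)
  have "bij_betw (lin A T) (EV A) (EV A)"
    by (rule bij_betw_byWitness[where f' = "lin A T'"]) (use inverse in_EV in auto)
  moreover have "lin A T ` init_span A r a = init_span A r a" for a
  proof
    show "lin A T ` init_span A r a \<subseteq> init_span A r a" using init_span by blast
    show "init_span A r a \<subseteq> lin A T ` init_span A r a"
    proof
      fix w :: "'a \<Rightarrow> 'k" assume w: "w \<in> init_span A r a"
      then have "w = lin A T (lin A T' w)" using inverse unfolding init_span_def by auto
      then show "w \<in> lin A T ` init_span A r a" using init_span[OF w] by blast
    qed
  qed
  ultimately show ?thesis unfolding graded_aut_initial_def T_def[symmetric] using supp by blast
qed

section \<open>Uniqueness of the Barannikov normal form\<close>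

definition down_set :: "'a set \<Rightarrow> ('a \<times> 'a) set \<Rightarrow> 'a \<Rightarrow> 'a set" where
  "down_set A r c = {c'\<in>A. c' = c \<or> (c', c) \<in> r}"

lemma init_span_down_set: "init_span A r a = EV A \<inter> supp_in (down_set A r a)"
  unfolding init_span_def down_set_def by simp

text \<open>The invariant that pins down the row of a in any elementary differential conjugate
  to e: taking S = {} detects a zero row, and the least c with S = down_set A r c the
  basis vector the row equals.\<close>
definition hits_within ::
  "'a set \<Rightarrow> ('a \<times> 'a) set \<Rightarrow> ('a \<Rightarrow> 'a \<Rightarrow> 'k::field) \<Rightarrow> 'a \<Rightarrow> 'a set \<Rightarrow> bool" where
  "hits_within A r e a S \<longleftrightarrow> (\<exists>v\<in>init_span A r a. v a \<noteq> 0 \<and> lin A e v \<in> supp_in S)"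

locale init_span_aut =
  fixes A :: "'a set" and r and deg :: "'a \<Rightarrow> int" and T :: "'a \<Rightarrow> 'a \<Rightarrow> 'k::field"
  assumes fin: "finite A" and trans: "trans r" and irrefl: "irrefl r"
    and aut: "graded_aut_initial A r deg T"
begin

lemma bij: "bij_betw (lin A T) (EV A) (EV A)"
  using aut unfolding graded_aut_initial_def by blast

lemma image_init_span: "a \<in> A \<Longrightarrow> lin A T ` init_span A r a = init_span A r a"
  using aut unfolding graded_aut_initial_def by blast

lemma lower_triangular:
  assumes "T b c \<noteq> 0" shows "c = b \<or> (c, b) \<in> r"
proof -
  have b: "b \<in> A" using assms aut unfolding graded_aut_initial_def by blast
  have "lin A T (bvec b) \<in> init_span A r b"
    using image_init_span[OF b] bvec_in_init_span[OF b] by blast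
  then show ?thesis using assms lin_bvec[OF fin b, of T] unfolding init_span_def supp_in_def by auto
qed

lemma lin_coeff_top:
  assumes a: "a \<in> A" and v: "v \<in> init_span A r a"
  shows "lin A T v a = v a * T a a"
  unfolding lin_def
proof (rule sum_eq_single[OF fin a])
  fix b assume b: "b \<in> A" "b \<noteq> a"
  show "v b * T b a = 0"
  proof (rule ccontr)
    assume "v b * T b a \<noteq> 0"
    then have "(b, a) \<in> r" "(a, b) \<in> r"
      using v b lower_triangular[of b a] unfolding init_span_def supp_in_def by auto
    then show False using trans irrefl unfolding trans_def irrefl_def by blast
  qed
qed

lemma diag_nonzero: assumes a: "a \<in> A" shows "T a a \<noteq> 0"
proof -
  obtain u where u: "u \<in> init_span A r a" "lin A T u = bvec a"
    using image_init_span[OF a] bvec_in_init_span[OF a] by (metis imageE)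
  have "1 = lin A T u a" using u(2) by (simp add: bvec_def)
  also have "\<dots> = u a * T a a" by (rule lin_coeff_top[OF a u(1)])
  finally show ?thesis by auto
qed

lemma lin_supp_in_iff:
  assumes u: "u \<in> EV A" and S: "S = {} \<or> (\<exists>c\<in>A. S = down_set A r c)"
  shows "lin A T u \<in> supp_in S \<longleftrightarrow> u \<in> supp_in S"
  using S
proof
  assume "S = {}"
  then have "w \<in> supp_in S \<longleftrightarrow> w = (\<lambda>_. 0)" for w :: "'a \<Rightarrow> 'k"
    unfolding supp_in_def by auto
  moreover have "(\<lambda>_. 0) \<in> EV A" unfolding EV_def by simp
  ultimately show ?thesis
    using bij u lin_zero[of A T] unfolding bij_betw_def inj_on_def by metis
next
  assume "\<exists>c\<in>A. S = down_set A r c"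
  then obtain c where c: "c \<in> A" and span: "init_span A r c = (EV A \<inter> supp_in S :: ('a \<Rightarrow> 'k) set)"
    using init_span_down_set by metis
  have "lin A T u \<in> EV A" and inj: "inj_on (lin A T) (EV A)"
    using bij u unfolding bij_betw_def by blast+
  moreover have "lin A T u \<in> init_span A r c \<longleftrightarrow> u \<in> init_span A r c"
  proof
    assume "lin A T u \<in> init_span A r c"
    then obtain u' where u': "u' \<in> init_span A r c" "lin A T u' = lin A T u"
      using image_init_span[OF c] by (metis imageE)
    then have "u' = u" using inj_onD[OF inj u'(2) _ u] unfolding init_span_def by blast
    with u' show "u \<in> init_span A r c" by simp
  qed (use image_init_span[OF c] in blast)
  ultimately have "lin A T u \<in> EV A \<inter> supp_in S \<longleftrightarrow> u \<in> EV A \<inter> supp_in S"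
    by (simp only: span)
  with \<open>lin A T u \<in> EV A\<close> u show ?thesis by blast
qed

lemma hits_within_conj:
  assumes conj: "\<forall>v\<in>EV A. lin A e1 (lin A T v) = lin A T (lin A e v)"
    and e_A: "\<And>b c. e b c \<noteq> 0 \<Longrightarrow> c \<in> A"
    and S: "S = {} \<or> (\<exists>c\<in>A. S = down_set A r c)" and a: "a \<in> A"
  shows "hits_within A r e1 a S \<longleftrightarrow> hits_within A r e a S"
proof -
  have "(\<exists>w\<in>lin A T ` init_span A r a. P w) \<longleftrightarrow> (\<exists>v\<in>init_span A r a. P (lin A T v))"
    for P :: "('a \<Rightarrow> 'k) \<Rightarrow> bool"
    by blast
  then have "hits_within A r e1 a S \<longleftrightarrow>
      (\<exists>v\<in>init_span A r a. lin A T v a \<noteq> 0 \<and> lin A e1 (lin A T v) \<in> supp_in S)"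
    unfolding hits_within_def image_init_span[OF a] .
  also have "\<dots> \<longleftrightarrow> (\<exists>v\<in>init_span A r a. v a \<noteq> 0 \<and> lin A e v \<in> supp_in S)"
  proof (rule bex_cong[OF refl])
    fix v :: "'a \<Rightarrow> 'k" assume v: "v \<in> init_span A r a"
    have "lin A e1 (lin A T v) \<in> supp_in S \<longleftrightarrow> lin A e v \<in> supp_in S"
      using conj lin_supp_in_iff[OF lin_in_EV[OF e_A] S] v unfolding init_span_def by simp
    moreover have "lin A T v a \<noteq> 0 \<longleftrightarrow> v a \<noteq> 0"
      using lin_coeff_top[OF a v] diag_nonzero[OF a] by simp
    ultimately show "lin A T v a \<noteq> 0 \<and> lin A e1 (lin A T v) \<in> supp_in S \<longleftrightarrow>
        v a \<noteq> 0 \<and> lin A e v \<in> supp_in S" by blast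
  qed
  finally show ?thesis unfolding hits_within_def .
qed

end

lemma elementary_row_outside:
  "elementary A r deg e \<Longrightarrow> a \<notin> A \<Longrightarrow> e a = (\<lambda>_. 0)"
  unfolding elementary_def M_differential_def by blast

lemma hits_within_bvec:
  assumes "finite A" "a \<in> A" "e a \<in> supp_in S"
  shows "hits_within A r e a S"
  unfolding hits_within_def
proof (intro bexI[of _ "bvec a"] conjI)
  show "lin A e (bvec a) \<in> supp_in S" using assms by (simp add: lin_bvec)
  show "bvec a \<in> init_span A r a" by (rule bvec_in_init_span[OF assms(2)])
qed (simp add: bvec_def)

lemma elementary_lin_coeff:
  assumes el: "elementary A r deg e" and fin: "finite A" and a: "a \<in> A"
    and ea: "e a = bvec c" and v: "v \<in> init_span A r a"
  shows "lin A e v c = v a"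
proof -
  have "lin A e v c = v a * e a c"
    unfolding lin_def
  proof (rule sum_eq_single[OF fin a])
    fix b assume b: "b \<in> A" "b \<noteq> a"
    show "v b * e b c = 0"
    proof (rule ccontr)
      assume "v b * e b c \<noteq> 0"
      then have "e b \<noteq> (\<lambda>_. 0)" and "e b c \<noteq> 0" by auto
      moreover obtain c' where "e b = bvec c'"
        using el b \<open>e b \<noteq> (\<lambda>_. 0)\<close> unfolding elementary_def by blast
      ultimately have "e b = e a" using ea by (simp add: bvec_def split: if_splits)
      then show False using el a b \<open>e b \<noteq> (\<lambda>_. 0)\<close> unfolding elementary_def by blast
    qed
  qed
  then show ?thesis using ea by (simp add: bvec_def)
qed

lemma elementary_hits_within_empty_iff:
  assumes el: "elementary A r deg e" and fin: "finite A" and a: "a \<in> A"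
  shows "hits_within A r e a {} \<longleftrightarrow> e a = (\<lambda>_. 0)"
proof
  assume "e a = (\<lambda>_. 0)"
  then show "hits_within A r e a {}" by (intro hits_within_bvec[OF fin a]) (simp add: supp_in_def)
next
  assume "hits_within A r e a {}"
  then obtain v where v: "v \<in> init_span A r a" "v a \<noteq> 0" "lin A e v = (\<lambda>_. 0)"
    unfolding hits_within_def supp_in_def by auto
  show "e a = (\<lambda>_. 0)"
  proof (rule ccontr)
    assume "e a \<noteq> (\<lambda>_. 0)"
    then obtain c where "e a = bvec c" using el a unfolding elementary_def by blast
    then have "lin A e v c = v a" using elementary_lin_coeff[OF el fin a _ v(1)] by blast
    with v show False by simp
  qed
qed

lemma elementary_row_eq_bvec_iff:
  assumes el: "elementary A r deg e" and fin: "finite A" and "trans r" "irrefl r"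
    and a: "a \<in> A" and ea: "e a \<noteq> (\<lambda>_. 0)"
  shows "e a = bvec c \<longleftrightarrow>
    c \<in> A \<and> hits_within A r e a (down_set A r c) \<and>
    (\<forall>c'\<in>A. (c', c) \<in> r \<longrightarrow> \<not> hits_within A r e a (down_set A r c'))"
    (is "_ \<longleftrightarrow> ?least c")
proof -
  obtain t where t: "e a = bvec t" using el a ea unfolding elementary_def by blast
  then have "e a t \<noteq> 0" by (simp add: bvec_def)
  then have "t \<in> A" using el unfolding elementary_def M_differential_def by blast
  have hits_iff: "hits_within A r e a (down_set A r c') \<longleftrightarrow> t \<in> down_set A r c'" for c'
  proof
    assume "hits_within A r e a (down_set A r c')"
    then obtain v where v: "v \<in> init_span A r a" "v a \<noteq> 0" "lin A e v \<in> supp_in (down_set A r c')"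
      unfolding hits_within_def by blast
    then have "lin A e v t \<noteq> 0" using elementary_lin_coeff[OF el fin a t] by simp
    with v(3) show "t \<in> down_set A r c'" unfolding supp_in_def by blast
  next
    assume "t \<in> down_set A r c'"
    then show "hits_within A r e a (down_set A r c')"
      using t by (intro hits_within_bvec[OF fin a]) (simp add: supp_in_def bvec_def)
  qed
  have "?least c \<longleftrightarrow> c = t"
    unfolding hits_iff using \<open>t \<in> A\<close> \<open>trans r\<close> \<open>irrefl r\<close>
    unfolding down_set_def trans_def irrefl_def by blast
  then show ?thesis using t bvec_inj by metis
qed

lemma barannikov_unique:
  assumes fin: "finite A" and "trans r" "irrefl r"
    and d_A: "\<And>b c. d b c \<noteq> 0 \<Longrightarrow> c \<in> A"
    and el1: "elementary A r deg e1" and T1: "graded_aut_initial A r deg T1"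
    and conj1: "\<forall>v\<in>EV A. lin A e1 (lin A T1 v) = lin A T1 (lin A d v)"
    and el2: "elementary A r deg e2" and T2: "graded_aut_initial A r deg T2"
    and conj2: "\<forall>v\<in>EV A. lin A e2 (lin A T2 v) = lin A T2 (lin A d v)"
  shows "e1 = e2"
proof
  fix a
  interpret T1: init_span_aut A r deg T1 using assms T1 by unfold_locales
  interpret T2: init_span_aut A r deg T2 using assms T2 by unfold_locales
  have hits: "hits_within A r e1 a S \<longleftrightarrow> hits_within A r e2 a S"
    if "S = {} \<or> (\<exists>c\<in>A. S = down_set A r c)" "a \<in> A" for S
    using T1.hits_within_conj[OF conj1 d_A that] T2.hits_within_conj[OF conj2 d_A that] by simp
  show "e1 a = e2 a"
  proof (cases "a \<in> A")
    case False
    then show ?thesis using elementary_row_outside[OF el1] elementary_row_outside[OF el2] by simp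
  next
    case a: True
    have zero: "e1 a = (\<lambda>_. 0) \<longleftrightarrow> e2 a = (\<lambda>_. 0)"
      using hits[of "{}"] a elementary_hits_within_empty_iff[OF el1 fin a]
        elementary_hits_within_empty_iff[OF el2 fin a] by simp
    show ?thesis
    proof (cases "e1 a = (\<lambda>_. 0)")
      case False
      then obtain c where "e1 a = bvec c" using el1 a unfolding elementary_def by blast
      moreover have "hits_within A r e1 a (down_set A r c') \<longleftrightarrow>
          hits_within A r e2 a (down_set A r c')" if "c' \<in> A" for c'
        using hits a that by blast
      ultimately have "e2 a = bvec c"
        using elementary_row_eq_bvec_iff[OF el1 fin \<open>trans r\<close> \<open>irrefl r\<close> a False]
          elementary_row_eq_bvec_iff[OF el2 fin \<open>trans r\<close> \<open>irrefl r\<close> a] False zero by auto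
      with \<open>e1 a = bvec c\<close> show ?thesis by simp
    qed (use zero in simp)
  qed
qed

lemma barannikov_eqI:
  assumes fin: "finite A" and "trans r" "irrefl r" and d_A: "\<And>b c. d b c \<noteq> 0 \<Longrightarrow> c \<in> A"
    and el: "elementary A r deg e" and T: "graded_aut_initial A r deg T"
    and conj: "\<forall>v\<in>EV A. lin A e (lin A T v) = lin A T (lin A d v)"
  shows "barannikov A r deg d = e"
  unfolding barannikov_def
proof (rule the_equality)
  show "elementary A r deg e \<and> (\<exists>T. graded_aut_initial A r deg T \<and>
      (\<forall>v\<in>EV A. lin A e (lin A T v) = lin A T (lin A d v)))"
    using el T conj by blast
next
  fix e' assume "elementary A r deg e' \<and> (\<exists>T. graded_aut_initial A r deg T \<and>
      (\<forall>v\<in>EV A. lin A e' (lin A T v) = lin A T (lin A d v)))"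
  then obtain T' where el': "elementary A r deg e'" and T': "graded_aut_initial A r deg T'"
    and conj': "\<forall>v\<in>EV A. lin A e' (lin A T' v) = lin A T' (lin A d v)"
    by blast
  show "e' = e"
    by (rule barannikov_unique[of A r d deg e' T' e T, OF fin \<open>trans r\<close> \<open>irrefl r\<close> d_A
          el' T' conj' el T conj])
qed

lemma elementaryI:
  assumes fin: "finite A"
    and supp: "\<And>a c. e a c \<noteq> 0 \<Longrightarrow> a \<in> A \<and> c \<in> A \<and> (c, a) \<in> r \<and> deg c = deg a - 1"
    and rows: "\<And>a. a \<in> A \<Longrightarrow> e a = (\<lambda>_. 0) \<or> (\<exists>t\<in>A. e a = bvec t)"
    and inj: "\<And>a1 a2. a1 \<in> A \<Longrightarrow> a2 \<in> A \<Longrightarrow> e a1 \<noteq> (\<lambda>_. 0) \<Longrightarrow> e a1 = e a2 \<Longrightarrow> a1 = a2"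
    and target: "\<And>a t. a \<in> A \<Longrightarrow> e a = bvec t \<Longrightarrow> e t = (\<lambda>_. 0)"
  shows "elementary A r deg e"
proof -
  have "(\<Sum>b\<in>A. e a b * e b c) = 0" if a: "a \<in> A" for a c
  proof (cases "e a = (\<lambda>_. 0)")
    case False
    then obtain t where "t \<in> A" "e a = bvec t" using rows[OF a] by blast
    then have "(\<Sum>b\<in>A. e a b * e b c) = e a t * e t c"
      by (intro sum_eq_single[OF fin]) (auto simp: bvec_def)
    then show ?thesis using target[OF a \<open>e a = bvec t\<close>] by simp
  qed simp
  then show ?thesis unfolding elementary_def M_differential_def using supp rows inj by blast
qed

definition partner :: "('a \<Rightarrow> 'a \<Rightarrow> 'k::field) \<Rightarrow> 'a \<Rightarrow> 'a" where
  "partner e a = (SOME t. e a = bvec t)"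

lemma partner_eqI: "e a = bvec t \<Longrightarrow> partner e a = t"
  unfolding partner_def by (rule some_equality) (auto dest: bvec_inj)

context
  fixes S r deg and e :: "'a \<Rightarrow> 'a \<Rightarrow> 'k::field"
  assumes el: "elementary S r deg e"
begin

lemma elementary_partner:
  assumes "a \<in> S" "e a \<noteq> (\<lambda>_. 0)"
  shows "partner e a \<in> S" "e a = bvec (partner e a)"
proof -
  obtain t where "t \<in> S" "e a = bvec t" using el assms unfolding elementary_def by blast
  then show "partner e a \<in> S" "e a = bvec (partner e a)" using partner_eqI by metis+
qed

lemma elementary_partner_inj: "inj_on (partner e) {a\<in>S. e a \<noteq> (\<lambda>_. 0)}"
proof (rule inj_onI)
  fix a1 a2 assume a: "a1 \<in> {a\<in>S. e a \<noteq> (\<lambda>_. 0)}" "a2 \<in> {a\<in>S. e a \<noteq> (\<lambda>_. 0)}"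
    and "partner e a1 = partner e a2"
  moreover have "e a1 = bvec (partner e a1)" "e a2 = bvec (partner e a2)"
    using a elementary_partner(2) by auto
  ultimately have "e a1 = e a2" by simp
  then show "a1 = a2" using el a unfolding elementary_def by blast
qed

lemma elementary_targets_eq:
  "{c. \<exists>b\<in>{a\<in>S. e a \<noteq> (\<lambda>_. 0)}. e b = bvec c} = partner e ` {a\<in>S. e a \<noteq> (\<lambda>_. 0)}"
proof (intro set_eqI iffI)
  fix c assume "c \<in> {c. \<exists>b\<in>{a\<in>S. e a \<noteq> (\<lambda>_. 0)}. e b = bvec c}"
  then obtain b where b: "b \<in> {a\<in>S. e a \<noteq> (\<lambda>_. 0)}" "e b = bvec c" by blast
  then have "c = partner e b" using partner_eqI[of e b, OF b(2)] by simp
  with b(1) show "c \<in> partner e ` {a\<in>S. e a \<noteq> (\<lambda>_. 0)}" by blast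
next
  fix c assume "c \<in> partner e ` {a\<in>S. e a \<noteq> (\<lambda>_. 0)}"
  then show "c \<in> {c. \<exists>b\<in>{a\<in>S. e a \<noteq> (\<lambda>_. 0)}. e b = bvec c}"
    using elementary_partner(2) by blast
qed

lemma elementary_row_partner:
  assumes "finite S" "a \<in> S" "e a \<noteq> (\<lambda>_. 0)"
  shows "e (partner e a) = (\<lambda>_. 0)"
proof
  fix c
  have "0 = (\<Sum>b\<in>S. e a b * e b c)" using el assms(2) unfolding elementary_def M_differential_def by auto
  also have "\<dots> = e a (partner e a) * e (partner e a) c"
    using elementary_partner[OF assms(2,3)]
    by (intro sum_eq_single[OF assms(1)]) (auto simp: bvec_def)
  also have "\<dots> = e (partner e a) c" using elementary_partner(2)[OF assms(2,3)] by (simp add: bvec_def)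
  finally show "e (partner e a) c = 0" by simp
qed

end

lemma trans_reorder: "trans r \<Longrightarrow> trans (reorder A B r)"
  unfolding trans_def reorder_def by blast

lemma irrefl_reorder: "irrefl r \<Longrightarrow> irrefl (reorder A B r)"
  unfolding irrefl_def reorder_def by blast

lemma cyc_plus_bd_insert_boundary:
  assumes p: "p \<in> B" and cycle: "lin B dB (bvec p) = (\<lambda>_. 0)"
    and boundary: "w\<^sub>p \<in> EV B" "lin B dB w\<^sub>p = bvec p"
  shows "cyc_plus_bd B (insert p S) dB = cyc_plus_bd B S dB"
proof
  show "cyc_plus_bd B S dB \<subseteq> cyc_plus_bd B (insert p S) dB"
    unfolding cyc_plus_bd_def supp_in_def by blast
  show "cyc_plus_bd B (insert p S) dB \<subseteq> cyc_plus_bd B S dB"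
  proof
    fix u assume "u \<in> cyc_plus_bd B (insert p S) dB"
    then obtain z w where u: "u = (\<lambda>c. z c + lin B dB w c)" and w: "w \<in> EV B"
      and z: "z \<in> EV B" "z \<in> supp_in (insert p S)" "lin B dB z = (\<lambda>_. 0)"
      unfolding cyc_plus_bd_def by blast
    define z' where "z' = (\<lambda>c. z c + (- z p) * bvec p c)"
    define w' where "w' = (\<lambda>c. w c + z p * w\<^sub>p c)"
    have "u = (\<lambda>c. z' c + lin B dB w' c)"
      unfolding u z'_def w'_def lin_add_scaled boundary(2) by (simp add: algebra_simps)
    moreover have "z' \<in> EV B" "z' \<in> supp_in S" "lin B dB z' = (\<lambda>_. 0)"
      using z p unfolding z'_def lin_add_scaled cycle by (auto simp: EV_def supp_in_def bvec_def)
    moreover have "w' \<in> EV B" using w boundary(1) unfolding w'_def EV_def by simp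
    ultimately show "u \<in> cyc_plus_bd B S dB" unfolding cyc_plus_bd_def by blast
  qed
qed

section \<open>Quasi-elementary differentials\<close>

locale quasi_elementary_diff =
  fixes A B :: "'a set" and r :: "('a \<times> 'a) set" and deg :: "'a \<Rightarrow> int"
    and d :: "'a \<Rightarrow> 'a \<Rightarrow> 'k::field"
  assumes fin: "finite A" and trans: "trans r" and irrefl: "irrefl r"
    and qe: "quasi_elementary A B r deg d"
begin

abbreviation "P \<equiv> QE_P B d"
abbreviation "Q \<equiv> QE_Q B d"
abbreviation "R \<equiv> QE_R B d"
abbreviation "X \<equiv> QE_X A B d"
abbreviation "Y \<equiv> QE_Y A B d"
abbreviation "Z \<equiv> QE_Z A B d"
abbreviation "dB \<equiv> restr B d"
abbreviation "dQ \<equiv> quot A B d"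
abbreviation "rof \<equiv> partner dB"
abbreviation "zof \<equiv> partner dQ"
abbreviation "yof \<equiv> the_inv_into Y zof"
abbreviation "r' \<equiv> reorder A B r"

lemma d_supp: "d a c \<noteq> 0 \<Longrightarrow> a \<in> A \<and> c \<in> A \<and> (c, a) \<in> r \<and> deg c = deg a - 1"
  and d_sq: "a \<in> A \<Longrightarrow> (\<Sum>b\<in>A. d a b * d b c) = 0"
  and B_subset: "B \<subseteq> A"
  and d_row_B: "b \<in> B \<Longrightarrow> d b c \<noteq> 0 \<Longrightarrow> c \<in> B"
  and elementary_dB: "elementary B r deg dB"
  and elementary_dQ: "elementary (A - B) r deg dQ"
  using qe unfolding quasi_elementary_def M_AB_differential_def M_differential_def by blast+

lemma finite_B: "finite B"
  using fin B_subset by (rule finite_subset[rotated])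

lemma X_P_conditions:
  "\<forall>x\<in>X. card {p\<in>P. d x p \<noteq> 0} \<le> 1 \<and> (\<forall>p\<in>P. d x p \<noteq> 0 \<longrightarrow> d x p = 1)"
  "\<forall>p\<in>P. card {x\<in>X. d x p \<noteq> 0} \<le> 1"
  using qe unfolding quasi_elementary_def by blast+

lemma X_P_coeff: "x \<in> X \<Longrightarrow> p \<in> P \<Longrightarrow> d x p \<noteq> 0 \<Longrightarrow> d x p = 1"
  using X_P_conditions(1) by blast

lemma X_P_unique:
  assumes "x \<in> X" "p1 \<in> P" "p2 \<in> P" "d x p1 \<noteq> 0" "d x p2 \<noteq> 0"
  shows "p1 = p2"
proof -
  have fin': "finite {p\<in>P. d x p \<noteq> 0}" using finite_B unfolding QE_P_def by simp
  have "\<forall>p1\<in>{p\<in>P. d x p \<noteq> 0}. \<forall>p2\<in>{p\<in>P. d x p \<noteq> 0}. p1 = p2"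
    using X_P_conditions(1) assms(1) card_le_Suc0_iff_eq[OF fin'] by simp
  then show ?thesis using assms(2-) by blast
qed

lemma P_X_unique:
  assumes "p \<in> P" "x1 \<in> X" "x2 \<in> X" "d x1 p \<noteq> 0" "d x2 p \<noteq> 0"
  shows "x1 = x2"
proof -
  have fin': "finite {x\<in>X. d x p \<noteq> 0}" using fin unfolding QE_X_def by simp
  have "\<forall>x1\<in>{x\<in>X. d x p \<noteq> 0}. \<forall>x2\<in>{x\<in>X. d x p \<noteq> 0}. x1 = x2"
    using X_P_conditions(2) assms(1) card_le_Suc0_iff_eq[OF fin'] by simp
  then show ?thesis using assms(2-) by blast
qed

lemma dB_row: "b \<in> B \<Longrightarrow> dB b = d b"
  using d_row_B unfolding restr_def by fastforce

lemma Q_eq: "Q = {b\<in>B. d b \<noteq> (\<lambda>_. 0)}"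
  unfolding QE_Q_def using dB_row by auto

lemma Q_subset_B: "Q \<subseteq> B" and P_subset_B: "P \<subseteq> B"
  unfolding QE_Q_def QE_P_def by auto

lemma d_row_Q: "q \<in> Q \<Longrightarrow> d q = bvec (rof q)"
  and rof_in_B: "q \<in> Q \<Longrightarrow> rof q \<in> B"
  using elementary_partner[OF elementary_dB] dB_row unfolding QE_Q_def by auto

lemma R_eq: "R = rof ` Q"
  unfolding QE_R_def QE_Q_def by (rule elementary_targets_eq[OF elementary_dB])

lemma inj_rof: "inj_on rof Q"
  unfolding QE_Q_def by (rule elementary_partner_inj[OF elementary_dB])

lemma R_subset_B: "R \<subseteq> B"
  unfolding R_eq using rof_in_B by blast

lemma d_row_R:
  assumes "c \<in> R" shows "d c = (\<lambda>_. 0)"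
proof -
  obtain q where q: "q \<in> Q" "c = rof q" using assms unfolding R_eq by blast
  then have "dB c = (\<lambda>_. 0)"
    using elementary_row_partner[OF elementary_dB finite_B] unfolding QE_Q_def by blast
  then show ?thesis using dB_row rof_in_B q by simp
qed

lemma d_row_P: "p \<in> P \<Longrightarrow> d p = (\<lambda>_. 0)"
  unfolding QE_P_def Q_eq by blast

lemma B_cases: "c \<in> B \<Longrightarrow> c \<in> P \<or> c \<in> Q \<or> c \<in> R"
  unfolding QE_P_def by blast

lemma disjoint_PQR: "c \<in> P \<Longrightarrow> c \<notin> Q" "c \<in> P \<Longrightarrow> c \<notin> R" "c \<in> Q \<Longrightarrow> c \<notin> R"
  using d_row_R unfolding QE_P_def Q_eq by auto

lemma lin_d_supported_B:
  assumes w: "\<And>c. c \<notin> B \<Longrightarrow> w c = 0"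
  shows "lin A d w = (\<lambda>c. \<Sum>q\<in>Q. w q * bvec (rof q) c)"
proof
  fix c
  have "lin A d w c = (\<Sum>b\<in>Q. w b * d b c)"
    unfolding lin_def
  proof (rule sum.mono_neutral_right[OF fin])
    show "Q \<subseteq> A" using Q_subset_B B_subset by blast
    show "\<forall>b\<in>A - Q. w b * d b c = 0" using w Q_eq by auto
  qed
  then show "lin A d w c = (\<Sum>q\<in>Q. w q * bvec (rof q) c)" using d_row_Q by simp
qed

lemma lin_d_at_rof:
  assumes "\<And>c. c \<notin> B \<Longrightarrow> w c = 0" and q: "q \<in> Q"
  shows "lin A d w (rof q) = w q"
proof -
  have "(\<Sum>q'\<in>Q. w q' * bvec (rof q') (rof q)) = w q * bvec (rof q) (rof q)"
    using inj_rof q finite_subset[OF Q_subset_B finite_B]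
    by (intro sum_eq_single) (auto simp: bvec_def inj_on_def)
  then show ?thesis using lin_d_supported_B[of w] assms(1) by (simp add: bvec_def)
qed

lemma lin_d_outside_R:
  assumes "\<And>c. c \<notin> B \<Longrightarrow> w c = 0" and "c \<notin> R"
  shows "lin A d w c = 0"
proof -
  have "lin A d w c = (\<Sum>q\<in>Q. w q * bvec (rof q) c)"
    using lin_d_supported_B[of w] assms(1) by simp
  also have "\<dots> = 0"
  proof (rule sum.neutral, intro ballI)
    fix q assume "q \<in> Q"
    then have "rof q \<noteq> c" using assms(2) unfolding R_eq by blast
    then show "w q * bvec (rof q) c = 0" by (simp add: bvec_def)
  qed
  finally show ?thesis .
qed

lemma Y_subset: "Y \<subseteq> A - B" and X_subset: "X \<subseteq> A - B"
  unfolding QE_Y_def QE_X_def by auto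

lemma dQ_row_Y: "y \<in> Y \<Longrightarrow> dQ y = bvec (zof y)"
  and zof_in: "y \<in> Y \<Longrightarrow> zof y \<in> A - B"
  using elementary_partner[OF elementary_dQ] unfolding QE_Y_def by auto

lemma Z_eq: "Z = zof ` Y"
  unfolding QE_Z_def QE_Y_def by (rule elementary_targets_eq[OF elementary_dQ])

lemma inj_zof: "inj_on zof Y"
  unfolding QE_Y_def by (rule elementary_partner_inj[OF elementary_dQ])

lemma yof: assumes "z \<in> Z" shows "yof z \<in> Y" "zof (yof z) = z"
  using the_inv_into_into[OF inj_zof _ subset_refl, of z] f_the_inv_into_f[OF inj_zof, of z]
    assms Z_eq by simp_all

lemma yof_zof: "y \<in> Y \<Longrightarrow> yof (zof y) = y"
  by (rule the_inv_into_f_f[OF inj_zof])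

lemma Z_subset: "Z \<subseteq> A - B"
  unfolding Z_eq using zof_in by blast

lemma dQ_row_Z:
  assumes "z \<in> Z" shows "dQ z = (\<lambda>_. 0)"
proof -
  obtain y where "y \<in> Y" "z = zof y" using assms unfolding Z_eq by blast
  then show ?thesis
    using elementary_row_partner[OF elementary_dQ] fin unfolding QE_Y_def by blast
qed

lemma dQ_row_not_Y: "a \<in> A - B \<Longrightarrow> a \<notin> Y \<Longrightarrow> dQ a = (\<lambda>_. 0)"
  unfolding QE_Y_def by blast

lemma A_minus_B_cases: "a \<in> A - B \<Longrightarrow> a \<in> X \<or> a \<in> Y \<or> a \<in> Z"
  unfolding QE_X_def by blast

lemma disjoint_XYZ: "a \<in> X \<Longrightarrow> a \<notin> Y" "a \<in> X \<Longrightarrow> a \<notin> Z" "a \<in> Z \<Longrightarrow> a \<notin> Y"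
  using dQ_row_Z unfolding QE_X_def QE_Y_def by auto

lemma deg_zof: assumes "y \<in> Y" shows "deg (zof y) = deg y - 1"
proof -
  have "dQ y (zof y) \<noteq> 0" using dQ_row_Y[OF assms] by (simp add: bvec_def)
  then show ?thesis using d_supp unfolding quot_def by (auto split: if_splits)
qed

definition bpart :: "'a \<Rightarrow> 'a \<Rightarrow> 'k" where
  "bpart a c = (if c \<in> B then d a c else 0)"

lemma bpart_outside_B: "c \<notin> B \<Longrightarrow> bpart a c = 0"
  unfolding bpart_def by simp

lemma d_row_split: "a \<in> A - B \<Longrightarrow> d a c = dQ a c + bpart a c"
  using d_supp[of a c] unfolding bpart_def quot_def by auto

lemma d_sq_split:
  assumes a: "a \<in> A - B"
  shows "(if a \<in> Y then d (zof a) c else 0) + lin A d (bpart a) c = 0"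
proof -
  have "(\<Sum>b\<in>A. dQ a b * d b c) = (if a \<in> Y then d (zof a) c else 0)"
  proof (cases "a \<in> Y")
    case True
    then have "(\<Sum>b\<in>A. dQ a b * d b c) = dQ a (zof a) * d (zof a) c"
      using zof_in dQ_row_Y by (intro sum_eq_single[OF fin]) (auto simp: bvec_def)
    then show ?thesis using True dQ_row_Y by (simp add: bvec_def)
  qed (use dQ_row_not_Y[OF a] in simp)
  moreover have "0 = (\<Sum>b\<in>A. dQ a b * d b c) + lin A d (bpart a) c"
    using d_sq[of a c] a d_row_split[OF a]
    by (simp add: lin_def sum.distrib algebra_simps)
  ultimately show ?thesis by simp
qed

lemma d_not_Y_Q: "a \<in> A - B \<Longrightarrow> a \<notin> Y \<Longrightarrow> q \<in> Q \<Longrightarrow> d a q = 0"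
  using d_sq_split[of a "rof q"] lin_d_at_rof[of "bpart a" q] bpart_outside_B Q_subset_B
  unfolding bpart_def by auto

lemma bpart_zof:
  assumes y: "y \<in> Y"
  shows "bpart (zof y) c = (if c \<in> R then - lin A d (bpart y) c else 0)"
  using d_sq_split[of y c] y Y_subset R_subset_B lin_d_outside_R[of "bpart y" c] bpart_outside_B
  unfolding bpart_def by (auto simp: eq_neg_iff_add_eq_0)

subsection \<open>The normal form and the conjugating automorphism\<close>

definition lift :: "('a \<Rightarrow> 'k) \<Rightarrow> 'a \<Rightarrow> 'k" where
  "lift w c = (if c \<in> Q then w (rof c) else 0)"

definition proj_P :: "('a \<Rightarrow> 'k) \<Rightarrow> 'a \<Rightarrow> 'k" where
  "proj_P w c = (if c \<in> P then w c else 0)"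

lemma lin_d_lift: "lin A d (lift w) c = (if c \<in> R then w c else 0)"
proof -
  have supp: "c \<notin> B \<Longrightarrow> lift w c = 0" for c using Q_subset_B unfolding lift_def by auto
  show ?thesis
  proof (cases "c \<in> R")
    case True
    then obtain q where "q \<in> Q" "c = rof q" unfolding R_eq by blast
    then show ?thesis using lin_d_at_rof[of "lift w" q, OF supp] True by (simp add: lift_def)
  qed (simp add: lin_d_outside_R[of "lift w", OF supp])
qed

lemma lin_d_proj_P: "lin A d (proj_P w) = (\<lambda>_. 0)"
  using d_row_P unfolding lin_def proj_P_def by (auto intro!: sum.neutral)

text \<open>The correction term corr a lies in E(B) and is chosen so that (1 - corr) conjugates d
  into the normal form dnf below.  On Z the P-component of bpart (yof z) is what makes
  the choice on Y (a lift through the pairing Q \<rightarrow> R) possible.\<close>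
definition corr_Z :: "'a \<Rightarrow> 'a \<Rightarrow> 'k" where
  "corr_Z z = (\<lambda>c. proj_P (bpart (yof z)) c - lift (bpart z) c)"

definition corr :: "'a \<Rightarrow> 'a \<Rightarrow> 'k" where
  "corr a =
    (if a \<in> X then (\<lambda>c. - lift (bpart a) c)
     else if a \<in> Z then corr_Z a
     else if a \<in> Y then lift (\<lambda>c. corr_Z (zof a) c - bpart a c)
     else (\<lambda>_. 0))"

definition dnf :: "'a \<Rightarrow> 'a \<Rightarrow> 'k" where
  "dnf a c =
    (if a \<in> B then d a c else if a \<in> X then (if c \<in> P then d a c else 0) else dQ a c)"

lemma corr_supp: "corr a c \<noteq> 0 \<Longrightarrow> a \<in> A - B \<and> c \<in> B"
  using X_subset Y_subset Z_subset Q_subset_B P_subset_B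
  unfolding corr_def corr_Z_def lift_def proj_P_def by (auto split: if_splits)

lemma lin_d_corr_Z: "lin A d (corr_Z z) c = - (if c \<in> R then bpart z c else 0)"
  unfolding corr_Z_def lin_diff lin_d_lift lin_d_proj_P by simp

lemma corr_Z_zof:
  assumes y: "y \<in> Y" and "c \<notin> R"
  shows "corr_Z (zof y) c = bpart y c"
proof -
  have "yof (zof y) = y" by (rule yof_zof[OF y])
  moreover have "lift (bpart (zof y)) c = (if c \<in> Q then - bpart y c else 0)"
    using bpart_zof[OF y] lin_d_at_rof[of "bpart y" c] bpart_outside_B disjoint_PQR(3)
    unfolding lift_def R_eq by auto
  moreover have "c \<in> B \<Longrightarrow> c \<in> P \<or> c \<in> Q" using B_cases \<open>c \<notin> R\<close> by blast
  ultimately show ?thesis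
    using disjoint_PQR(1) P_subset_B Q_subset_B bpart_outside_B[of c y]
    unfolding corr_Z_def proj_P_def by (cases "c \<in> B") auto
qed

lemma dnf_eq_X:
  assumes a: "a \<in> X"
  shows "dnf a c = d a c + lin A d (corr a) c"
proof -
  have aAB: "a \<in> A - B" and "a \<notin> Y" using a X_subset disjoint_XYZ by auto
  then have d_eq: "d a c = bpart a c" using d_row_split dQ_row_not_Y by simp
  have "lin A d (corr a) c = - (if c \<in> R then bpart a c else 0)"
    using a unfolding corr_def by (simp add: lin_minus lin_d_lift)
  moreover have "dnf a c = (if c \<in> P then d a c else 0)" using a aAB unfolding dnf_def by simp
  moreover have "c \<in> Q \<Longrightarrow> d a c = 0" by (rule d_not_Y_Q[OF aAB \<open>a \<notin> Y\<close>])
  ultimately show ?thesis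
    using B_cases[of c] disjoint_PQR d_eq bpart_outside_B[of c a] by (cases "c \<in> B") auto
qed

lemma dnf_eq_Z:
  assumes z: "z \<in> Z"
  shows "dnf z c = d z c + lin A d (corr z) c"
proof -
  have "z \<in> A - B" "z \<notin> X" using z Z_subset disjoint_XYZ by auto
  then have "dnf z c = 0" "d z c = bpart z c" using dQ_row_Z[OF z] d_row_split
    unfolding dnf_def by auto
  moreover have "c \<notin> R \<Longrightarrow> bpart z c = 0" using bpart_zof[OF yof(1)[OF z]] yof(2)[OF z] by simp
  ultimately show ?thesis using z \<open>z \<notin> X\<close> lin_d_corr_Z unfolding corr_def by auto
qed

lemma dnf_eq_Y:
  assumes y: "y \<in> Y"
  shows "dnf y c = d y c + lin A d (corr y) c - corr (zof y) c"
proof -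
  have "y \<in> A - B" "y \<notin> X" "y \<notin> Z" using y Y_subset disjoint_XYZ by auto
  moreover have "zof y \<in> Z" "zof y \<notin> X" using y Z_eq disjoint_XYZ by auto
  ultimately have "corr y = lift (\<lambda>c. corr_Z (zof y) c - bpart y c)" "corr (zof y) = corr_Z (zof y)"
    "dnf y c = dQ y c" "d y c = dQ y c + bpart y c"
    using y d_row_split unfolding corr_def dnf_def by auto
  then show ?thesis using corr_Z_zof[OF y, of c] by (simp add: lin_d_lift)
qed

lemma dnf_eq:
  assumes a: "a \<in> A"
  shows "dnf a c = d a c + lin A d (corr a) c - (if a \<in> Y then corr (zof a) c else 0)"
proof (cases "a \<in> B")
  case True
  then have "corr a = (\<lambda>_. 0)" "a \<notin> Y" using corr_supp Y_subset by auto
  then show ?thesis using True unfolding dnf_def by simp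
next
  case False
  then consider "a \<in> X" | "a \<in> Y" | "a \<in> Z" using A_minus_B_cases a by blast
  then show ?thesis
    using dnf_eq_X dnf_eq_Y dnf_eq_Z disjoint_XYZ by cases auto
qed

abbreviation "T_corr \<equiv> \<lambda>a c. id_mat A a c - corr a c"

lemma sum_corr_dnf: "(\<Sum>b\<in>A. corr a b * dnf b c) = lin A d (corr a) c"
  unfolding lin_def using corr_supp by (intro sum.cong) (auto simp: dnf_def)

lemma sum_d_corr:
  assumes a: "a \<in> A"
  shows "(\<Sum>b\<in>A. d a b * corr b c) = (if a \<in> Y then corr (zof a) c else 0)"
proof -
  have "d a b * corr b c = (if a \<in> Y \<and> b = zof a then corr (zof a) c else 0)" if "b \<in> A" for b
  proof (cases "corr b c = 0")
    case False
    then have b: "b \<in> A - B" using corr_supp by blast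
    have "d a b = (if a \<in> Y then bvec (zof a) b else 0)"
    proof (cases "a \<in> B")
      case True
      then show ?thesis using d_row_B b Y_subset by auto
    next
      case False
      then have "d a b = dQ a b" using d_row_split[of a b] a bpart_outside_B b by simp
      then show ?thesis using dQ_row_Y dQ_row_not_Y[of a] a False by auto
    qed
    then show ?thesis by (simp add: bvec_def)
  qed auto
  then have "(\<Sum>b\<in>A. d a b * corr b c) = (\<Sum>b\<in>A. if a \<in> Y \<and> b = zof a then corr (zof a) c else 0)"
    by (rule sum.cong[OF refl])
  then show ?thesis using zof_in fin by (simp add: sum.delta')
qed

lemma dnf_conj: "\<forall>v\<in>EV A. lin A dnf (lin A T_corr v) = lin A T_corr (lin A d v)"
proof
  fix v :: "'a \<Rightarrow> 'k" assume "v \<in> EV A"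
  have "(\<Sum>b\<in>A. T_corr a b * dnf b c) = (\<Sum>b\<in>A. d a b * T_corr b c)" if a: "a \<in> A" for a c
  proof -
    have "(\<Sum>b\<in>A. T_corr a b * dnf b c) = dnf a c - lin A d (corr a) c"
      using sum_id_mat_left[OF fin a] sum_corr_dnf by (simp add: left_diff_distrib sum_subtractf)
    moreover have "(\<Sum>b\<in>A. d a b * T_corr b c) = d a c - (if a \<in> Y then corr (zof a) c else 0)"
      using sum_id_mat_right[OF fin, of "d a" c] d_supp sum_d_corr[OF a]
      by (simp add: right_diff_distrib sum_subtractf)
    ultimately show ?thesis using dnf_eq[OF a] by simp
  qed
  then show "lin A dnf (lin A T_corr v) = lin A T_corr (lin A d v)"
    unfolding lin_lin[OF fin] by (rule lin_cong_rows)
qed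

definition homogeneous :: "int \<Rightarrow> ('a \<Rightarrow> 'k) \<Rightarrow> bool" where
  "homogeneous k w \<longleftrightarrow> (\<forall>c. w c \<noteq> 0 \<longrightarrow> deg c = k)"

lemma homogeneous_bpart: "homogeneous (deg a - 1) (bpart a)"
  unfolding homogeneous_def bpart_def using d_supp by auto

lemma homogeneous_lift:
  assumes "homogeneous k w" shows "homogeneous (k + 1) (lift w)"
  unfolding homogeneous_def
proof (intro allI impI)
  fix c assume "lift w c \<noteq> 0"
  then have c: "c \<in> Q" "w (rof c) \<noteq> 0" unfolding lift_def by (auto split: if_splits)
  then have "d c (rof c) \<noteq> 0" using d_row_Q by (simp add: bvec_def)
  then have "deg (rof c) = deg c - 1" using d_supp by blast
  moreover have "deg (rof c) = k" using assms c(2) unfolding homogeneous_def by blast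
  ultimately show "deg c = k + 1" by simp
qed

lemma homogeneous_proj_P: "homogeneous k w \<Longrightarrow> homogeneous k (proj_P w)"
  unfolding homogeneous_def proj_P_def by auto

lemma homogeneous_minus: "homogeneous k w \<Longrightarrow> homogeneous k (\<lambda>c. - w c)"
  unfolding homogeneous_def by auto

lemma homogeneous_diff: "homogeneous k u \<Longrightarrow> homogeneous k w \<Longrightarrow> homogeneous k (\<lambda>c. u c - w c)"
  unfolding homogeneous_def by (metis diff_zero diff_0 neg_0_equal_iff_equal)

lemma homogeneous_corr_Z:
  assumes z: "z \<in> Z" shows "homogeneous (deg z) (corr_Z z)"
proof -
  have "deg z = deg (yof z) - 1" using deg_zof yof[OF z] by metis
  then have "homogeneous (deg z) (proj_P (bpart (yof z)))"
    using homogeneous_proj_P[OF homogeneous_bpart] by simp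
  moreover have "homogeneous (deg z) (lift (bpart z))"
    using homogeneous_lift[OF homogeneous_bpart[of z]] by simp
  ultimately show ?thesis unfolding corr_Z_def by (rule homogeneous_diff)
qed

lemma homogeneous_corr: "homogeneous (deg a) (corr a)"
proof -
  have X: "homogeneous (deg a) (\<lambda>c. - lift (bpart a) c)"
    using homogeneous_minus[OF homogeneous_lift[OF homogeneous_bpart[of a]]] by simp
  have Y: "homogeneous (deg a) (lift (\<lambda>c. corr_Z (zof a) c - bpart a c))" if "a \<in> Y"
  proof -
    have "zof a \<in> Z" using that unfolding Z_eq by blast
    then have "homogeneous (deg a - 1) (corr_Z (zof a))"
      using homogeneous_corr_Z deg_zof[OF that] by metis
    then show ?thesis using homogeneous_lift[OF homogeneous_diff[OF _ homogeneous_bpart]] by fastforce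
  qed
  show ?thesis
    unfolding corr_def using X Y homogeneous_corr_Z by (simp add: homogeneous_def)
qed

lemma graded_aut_T_corr: "graded_aut_initial A r' deg T_corr"
proof (rule unipotent_graded_aut_initial[OF fin trans_reorder[OF trans]])
  fix a c assume "corr a c \<noteq> 0"
  then show "a \<in> A \<and> c \<in> A \<and> deg c = deg a \<and> (c, a) \<in> r'"
    using corr_supp B_subset homogeneous_corr unfolding homogeneous_def reorder_def by blast
next
  fix a c
  have "corr a b * corr b c = 0" for b using corr_supp by (cases "corr a b = 0") auto
  then show "(\<Sum>b\<in>A. corr a b * corr b c) = 0" by (intro sum.neutral) blast
qed

lemma dnf_X:
  assumes x: "x \<in> X" and p: "p \<in> P" and "d x p \<noteq> 0"
  shows "dnf x = bvec p"
proof
  fix c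
  have "dnf x c = (if c \<in> P then d x c else 0)" using x X_subset unfolding dnf_def by auto
  moreover have "d x p = 1" by (rule X_P_coeff[OF x p \<open>d x p \<noteq> 0\<close>])
  moreover have "c \<in> P \<Longrightarrow> c \<noteq> p \<Longrightarrow> d x c = 0"
    using X_P_unique[OF x p, of c] \<open>d x p \<noteq> 0\<close> by blast
  ultimately show "dnf x c = bvec p c" using p by (auto simp: bvec_def)
qed

lemma dnf_row_cases:
  assumes a: "a \<in> A" and nz: "dnf a \<noteq> (\<lambda>_. 0)"
  shows "(a \<in> Q \<and> dnf a = bvec (rof a)) \<or> (a \<in> X \<and> (\<exists>p\<in>P. d a p \<noteq> 0 \<and> dnf a = bvec p)) \<or>
    (a \<in> Y \<and> dnf a = bvec (zof a))"
proof (cases "a \<in> B")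
  case True
  then have "dnf a = d a" by (intro ext) (simp add: dnf_def)
  moreover have "a \<in> Q" using True nz \<open>dnf a = d a\<close> unfolding Q_eq by simp
  ultimately show ?thesis using d_row_Q by simp
next
  case False
  show ?thesis
  proof (cases "a \<in> X")
    case True
    then have "dnf a = (\<lambda>c. if c \<in> P then d a c else 0)" using False by (intro ext) (simp add: dnf_def)
    then have "\<exists>p\<in>P. d a p \<noteq> 0" using nz by (auto split: if_splits)
    then show ?thesis using True dnf_X by blast
  next
    case nX: False
    then have "dnf a = dQ a" using False by (intro ext) (simp add: dnf_def)
    moreover have "a \<in> Y" using nz dQ_row_not_Y a False \<open>dnf a = dQ a\<close> by auto
    ultimately show ?thesis using dQ_row_Y by simp
  qed
qed

lemma dnf_targets:
  assumes a: "a \<in> A" and t: "dnf a = bvec t"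
  shows "(a \<in> Q \<and> t = rof a \<and> t \<in> R) \<or> (a \<in> X \<and> t \<in> P \<and> d a t \<noteq> 0) \<or>
    (a \<in> Y \<and> t = zof a \<and> t \<in> Z)"
proof -
  have "dnf a \<noteq> (\<lambda>_. 0)" using t by (metis bvec_def one_neq_zero)
  then show ?thesis using dnf_row_cases[OF a] t bvec_inj R_eq Z_eq by (metis image_eqI)
qed

lemma elementary_dnf: "elementary A r' deg dnf"
proof (rule elementaryI[OF fin])
  fix a c assume "dnf a c \<noteq> 0"
  then have "d a c \<noteq> 0" unfolding dnf_def quot_def by (auto split: if_splits)
  then show "a \<in> A \<and> c \<in> A \<and> (c, a) \<in> r' \<and> deg c = deg a - 1"
    using d_supp[of a c] d_row_B[of a c] unfolding reorder_def by auto
next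
  fix a assume "a \<in> A"
  then show "dnf a = (\<lambda>_. 0) \<or> (\<exists>t\<in>A. dnf a = bvec t)"
    using dnf_row_cases rof_in_B zof_in P_subset_B B_subset by blast
next
  fix a1 a2 assume a: "a1 \<in> A" "a2 \<in> A" and nz: "dnf a1 \<noteq> (\<lambda>_. 0)" and eq: "dnf a1 = dnf a2"
  then obtain t where t: "dnf a1 = bvec t" "dnf a2 = bvec t"
    using dnf_row_cases by metis
  show "a1 = a2"
    using dnf_targets[OF a(1) t(1)] dnf_targets[OF a(2) t(2)]
      inj_rof inj_zof P_X_unique disjoint_PQR Z_subset P_subset_B R_subset_B
    unfolding inj_on_def by blast
next
  fix a t assume "a \<in> A" "dnf a = bvec t"
  then consider "t \<in> R" | "t \<in> P" | "t \<in> Z" using dnf_targets by blast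
  then show "dnf t = (\<lambda>_. 0)"
  proof cases
    case 3
    then have "t \<notin> B" "t \<notin> X" using Z_subset disjoint_XYZ by auto
    then show ?thesis using dQ_row_Z[OF 3] by (intro ext) (simp add: dnf_def)
  qed (use d_row_R d_row_P R_subset_B P_subset_B in \<open>auto intro!: ext simp: dnf_def\<close>)
qed

lemma barannikov_eq_dnf: "barannikov A r' deg d = dnf"
  using barannikov_eqI[OF fin trans_reorder[OF trans] irrefl_reorder[OF irrefl] _ elementary_dnf
      graded_aut_T_corr dnf_conj] d_supp by blast

lemma H_ess_not_R:
  assumes "p \<in> H_ess A B r d" shows "p \<notin> R"
proof
  assume "p \<in> R"
  then obtain q where q: "q \<in> Q" "p = rof q" unfolding R_eq by blast
  have p: "p \<in> B" using \<open>p \<in> R\<close> R_subset_B by blast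
  have cycle: "lin B dB (bvec p) = (\<lambda>_. 0)"
    using lin_bvec[OF finite_B p, of dB] dB_row[OF p] d_row_R[OF \<open>p \<in> R\<close>] by simp
  have "q \<in> B" using q Q_subset_B by blast
  then have boundary: "bvec q \<in> EV B" "lin B dB (bvec q) = bvec p"
    using lin_bvec[OF finite_B, of q dB] dB_row d_row_Q q by (auto simp: EV_def bvec_def)
  have "{c\<in>B. c = p \<or> (c, p) \<in> r} = insert p {c\<in>B. (c, p) \<in> r}" using p by blast
  then have "cyc_plus_bd B {c\<in>B. c = p \<or> (c, p) \<in> r} dB = cyc_plus_bd B {c\<in>B. (c, p) \<in> r} dB"
    using cyc_plus_bd_insert_boundary[OF p cycle boundary] by simp
  then show False using assms unfolding H_ess_def by simp
qed

end

theorem lemma3p6: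
  fixes A B :: "'a set" and r :: "('a \<times> 'a) set" and deg :: "'a \<Rightarrow> int"
    and d :: "'a \<Rightarrow> 'a \<Rightarrow> 'k::field" and x p :: 'a
  assumes "finite A"
    and "strict_linear_order_on A r"
    and "quasi_elementary A B r deg d"
    and "p \<in> H_ess A B r d"
    and "x \<in> QE_X A B d"
    and "d x p \<noteq> 0"
  shows "is_pair A (reorder A B r) deg d x p"
proof -
  interpret quasi_elementary_diff A B r deg d
    using assms(1-3) by unfold_locales (auto simp: strict_linear_order_on_def)
  have "p \<in> B" using assms(4) unfolding H_ess_def by blast
  moreover have "p \<notin> Q" using d_not_Y_Q[of x p] assms(5,6) X_subset disjoint_XYZ by blast
  moreover have "p \<notin> R" using H_ess_not_R[OF assms(4)] .
  ultimately have "p \<in> P" unfolding QE_P_def by blast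
  then have "dnf x = bvec p" using dnf_X assms(5,6) by blast
  then show ?thesis unfolding is_pair_def barannikov_eq_dnf .
qed

end
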